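(* For every subset $I$ of $\mathbb{N}$, the monoid $M_I=\langle a,b,c,d \mid ab^ic=ab^id \ (i\in I)\rangle$ is a finitely generated strongly $0$-hyperbolic monoid.
   Context: Directed graphs may have loops and multiple edges; $d(u,v)$ is the length of a shortest directed path from $u$ to $v$ ($\infty$ if none). Out-ball $\overrightarrow{\mathcal{B}}_r(x)=\{y : d(x,y)\le r\}$, in-ball $\overleftarrow{\mathcal{B}}_r(x)=\{y : d(y,x)\le r\}$, extended to sets by union. A path $[x_0,\dots,x_n]$ is a geodesic if $n=d(x_0,x_n)$. A directed geodesic triangle is an ordered triple $(p,q,r)$ of geodesics with the end of $p$ equal to the start of $q$ and $p\circ q$ having the same start and end as $r$; it is $0$-thin if every vertex of $r$ lies in $\overrightarrow{\mathcal{B}}_0(p)\cup\overleftarrow{\mathcal{B}}_0(q)$, every vertex of $p$ lies in $\overrightarrow{\mathcal{B}}_0(r)\cup\overleftarrow{\mathcal{B}}_0(q)$, and every vertex of $q$ lies in $\overrightarrow{\mathcal{B}}_0(p)\cup\overleftarrow{\mathcal{B}}_0(r)$. A monoid is strongly $0$-hyperbolic if its right Cayley graph w.r.t. some finite generating set $A$ (vertex set the monoid, edge $m\to n$ for each $a\in A$ with $ma=n$) has all directed geodesic triangles $0$-thin. *)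

theory Defs
  imports "HOL-Algebra.Group" "HOL-Library.Extended_Nat"
begin

text \<open>Multiple edges do not affect vertex paths or distances, so the graph is
  represented by its (loop-allowing) edge relation.\<close>

definition cayley_edge :: "('a,'b) monoid_scheme \<Rightarrow> 'a set \<Rightarrow> 'a \<Rightarrow> 'a \<Rightarrow> bool" where
  "cayley_edge G A m n \<longleftrightarrow> m \<in> carrier G \<and> n \<in> carrier G \<and> (\<exists>a\<in>A. m \<otimes>\<^bsub>G\<^esub> a = n)"

definition cayley_path :: "('a,'b) monoid_scheme \<Rightarrow> 'a set \<Rightarrow> 'a list \<Rightarrow> bool" where
  "cayley_path G A xs \<longleftrightarrow> xs \<noteq> [] \<and> set xs \<subseteq> carrier G \<and>
     (\<forall>i. Suc i < length xs \<longrightarrow> cayley_edge G A (xs ! i) (xs ! Suc i))"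

text \<open>Directed distance (infinity if there is no path).\<close>
definition cdist :: "('a,'b) monoid_scheme \<Rightarrow> 'a set \<Rightarrow> 'a \<Rightarrow> 'a \<Rightarrow> enat" where
  "cdist G A u v = (INF xs \<in> {xs. cayley_path G A xs \<and> hd xs = u \<and> last xs = v}. enat (length xs - 1))"

definition out_ball :: "('a,'b) monoid_scheme \<Rightarrow> 'a set \<Rightarrow> enat \<Rightarrow> 'a set \<Rightarrow> 'a set" where
  "out_ball G A r S = {y \<in> carrier G. \<exists>x\<in>S. cdist G A x y \<le> r}"

definition in_ball :: "('a,'b) monoid_scheme \<Rightarrow> 'a set \<Rightarrow> enat \<Rightarrow> 'a set \<Rightarrow> 'a set" where
  "in_ball G A r S = {y \<in> carrier G. \<exists>x\<in>S. cdist G A y x \<le> r}"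

definition geodesic :: "('a,'b) monoid_scheme \<Rightarrow> 'a set \<Rightarrow> 'a list \<Rightarrow> bool" where
  "geodesic G A xs \<longleftrightarrow> cayley_path G A xs \<and> enat (length xs - 1) = cdist G A (hd xs) (last xs)"

definition geodesic_triangle :: "('a,'b) monoid_scheme \<Rightarrow> 'a set \<Rightarrow> 'a list \<Rightarrow> 'a list \<Rightarrow> 'a list \<Rightarrow> bool" where
  "geodesic_triangle G A p q r \<longleftrightarrow> geodesic G A p \<and> geodesic G A q \<and> geodesic G A r \<and>
     last p = hd q \<and> hd r = hd p \<and> last r = last q"

definition thin_triangle :: "('a,'b) monoid_scheme \<Rightarrow> 'a set \<Rightarrow> enat \<Rightarrow> 'a list \<Rightarrow> 'a list \<Rightarrow> 'a list \<Rightarrow> bool" where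
  "thin_triangle G A \<delta> p q r \<longleftrightarrow>
     set r \<subseteq> out_ball G A \<delta> (set p) \<union> in_ball G A \<delta> (set q) \<and>
     set p \<subseteq> out_ball G A \<delta> (set r) \<union> in_ball G A \<delta> (set q) \<and>
     set q \<subseteq> out_ball G A \<delta> (set p) \<union> in_ball G A \<delta> (set r)"

inductive_set monoid_span :: "('a,'b) monoid_scheme \<Rightarrow> 'a set \<Rightarrow> 'a set" for G A where
  one: "\<one>\<^bsub>G\<^esub> \<in> monoid_span G A"
| step: "x \<in> monoid_span G A \<Longrightarrow> a \<in> A \<Longrightarrow> x \<otimes>\<^bsub>G\<^esub> a \<in> monoid_span G A"

definition generates :: "('a,'b) monoid_scheme \<Rightarrow> 'a set \<Rightarrow> bool" where
  "generates G A \<longleftrightarrow> A \<subseteq> carrier G \<and> carrier G \<subseteq> monoid_span G A"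

definition finitely_generated :: "('a,'b) monoid_scheme \<Rightarrow> bool" where
  "finitely_generated G \<longleftrightarrow> (\<exists>A. finite A \<and> generates G A)"

definition strongly_hyperbolic :: "('a,'b) monoid_scheme \<Rightarrow> enat \<Rightarrow> bool" where
  "strongly_hyperbolic G \<delta> \<longleftrightarrow> (\<exists>A. finite A \<and> generates G A \<and>
     (\<forall>p q r. geodesic_triangle G A p q r \<longrightarrow> thin_triangle G A \<delta> p q r))"

datatype gen4 = ga | gb | gc | gd

inductive_set MI_cong :: "nat set \<Rightarrow> (gen4 list \<times> gen4 list) set" for I where
  rel: "i \<in> I \<Longrightarrow> (ga # replicate i gb @ [gc], ga # replicate i gb @ [gd]) \<in> MI_cong I"
| refl: "(u, u) \<in> MI_cong I"
| sym: "(u, v) \<in> MI_cong I \<Longrightarrow> (v, u) \<in> MI_cong I"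
| trans: "(u, v) \<in> MI_cong I \<Longrightarrow> (v, w) \<in> MI_cong I \<Longrightarrow> (u, w) \<in> MI_cong I"
| ctx: "(u, v) \<in> MI_cong I \<Longrightarrow> (x @ u @ y, x @ v @ y) \<in> MI_cong I"

definition M_I :: "nat set \<Rightarrow> gen4 list set monoid" where
  "M_I I = \<lparr> carrier = UNIV // MI_cong I,
            mult = (\<lambda>X Y. {w. \<exists>u\<in>X. \<exists>v\<in>Y. (u @ v, w) \<in> MI_cong I}),
            one = MI_cong I `` {[]} \<rparr>"

end

theory Submission
  imports Defs
begin

text \<open>The defining relations \<open>a b\<^sup>i c = a b\<^sup>i d\<close> relate words of equal length that agree
  after deleting their last letter. Hence word length is an invariant of \<open>M\<^sub>I\<close>, and the
  congruence can be cancelled on the right by a single letter: \<open>u x = v y\<close> in \<open>M\<^sub>I\<close> implies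
  \<open>u = v\<close>. In the right Cayley graph with respect to \<open>{a, b, c, d}\<close> every edge therefore
  increases length by one and every vertex has at most one predecessor, so any two paths with
  the same endpoints coincide. In a geodesic triangle \<open>(p, q, r)\<close> this forces \<open>r = p \<circ> q\<close>, and
  every vertex of each side already lies on one of the other two sides.\<close>

lemma cayley_path_Cons_Cons:
  "cayley_path G A (x # y # zs) \<longleftrightarrow> cayley_edge G A x y \<and> cayley_path G A (y # zs)"
  unfolding cayley_path_def by (auto simp: All_less_Suc2 cayley_edge_def)

lemma cayley_path_concat:
  "cayley_path G A p \<Longrightarrow> cayley_path G A q \<Longrightarrow> last p = hd q \<Longrightarrow> cayley_path G A (p @ tl q)"
proof (induction p rule: induct_list012)
  case 1
  then show ?case by (simp add: cayley_path_def)
next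
  case (2 x)
  then have "q = x # tl q" by (cases q) (auto simp: cayley_path_def)
  with 2 show ?case by simp
next
  case (3 x y zs)
  then show ?case by (simp add: cayley_path_Cons_Cons)
qed

lemma cayley_path_grading:
  assumes grading: "\<And>m n. cayley_edge G A m n \<Longrightarrow> f n = Suc (f m)"
    and "cayley_path G A xs" and "i < length xs"
  shows "f (xs ! i) = f (hd xs) + i"
  using assms(3)
proof (induction i)
  case 0
  then show ?case by (simp add: hd_conv_nth)
next
  case (Suc i)
  then have "cayley_edge G A (xs ! i) (xs ! Suc i)"
    using assms(2) by (simp add: cayley_path_def)
  with Suc grading show ?case by simp
qed

lemma cayley_path_length_graded:
  assumes "\<And>m n. cayley_edge G A m n \<Longrightarrow> f n = Suc (f m)" and "cayley_path G A xs"
  shows "f (last xs) = f (hd xs) + (length xs - 1)"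
proof -
  have "xs \<noteq> []" using assms(2) by (simp add: cayley_path_def)
  then show ?thesis
    using cayley_path_grading[OF assms, where i="length xs - 1"] by (simp add: last_conv_nth)
qed

lemma cayley_path_unique:
  assumes unique_source: "\<And>m m' n. cayley_edge G A m n \<Longrightarrow> cayley_edge G A m' n \<Longrightarrow> m = m'"
    and grading: "\<And>m n. cayley_edge G A m n \<Longrightarrow> f n = Suc (f m)"
    and xs: "cayley_path G A xs" and ys: "cayley_path G A ys"
    and "hd xs = hd ys" and "last xs = last ys"
  shows "xs = ys"
proof -
  have "xs \<noteq> []" "ys \<noteq> []" using xs ys by (auto simp: cayley_path_def)
  moreover have "length xs - 1 = length ys - 1"
    using cayley_path_length_graded[OF grading xs] cayley_path_length_graded[OF grading ys]
      \<open>hd xs = hd ys\<close> \<open>last xs = last ys\<close> by simp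
  ultimately have len: "length xs = length ys" by (cases xs; cases ys) auto
  have "xs ! i = ys ! i" if "i \<le> length xs - 1" for i
    using that
  proof (induction rule: inc_induct)
    case base
    with \<open>xs \<noteq> []\<close> \<open>ys \<noteq> []\<close> \<open>last xs = last ys\<close> len show ?case by (simp add: last_conv_nth)
  next
    case (step i)
    have "cayley_edge G A (xs ! i) (xs ! Suc i)" "cayley_edge G A (ys ! i) (ys ! Suc i)"
      using xs ys len step.hyps unfolding cayley_path_def by auto
    with step.IH show ?case using unique_source by metis
  qed
  with len show ?thesis by (intro nth_equalityI) auto
qed

lemma subset_out_ball_zero: "S \<subseteq> carrier G \<Longrightarrow> S \<subseteq> out_ball G A 0 S"
  and subset_in_ball_zero: "S \<subseteq> carrier G \<Longrightarrow> S \<subseteq> in_ball G A 0 S"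
proof -
  have "cdist G A x x \<le> 0" if "x \<in> carrier G" for x
  proof -
    have "[x] \<in> {xs. cayley_path G A xs \<and> hd xs = x \<and> last xs = x}"
      using that by (simp add: cayley_path_def)
    then have "cdist G A x x \<le> enat (length [x] - 1)" unfolding cdist_def by (rule INF_lower)
    then show ?thesis by (simp add: zero_enat_def)
  qed
  then show "S \<subseteq> carrier G \<Longrightarrow> S \<subseteq> out_ball G A 0 S" "S \<subseteq> carrier G \<Longrightarrow> S \<subseteq> in_ball G A 0 S"
    unfolding out_ball_def in_ball_def by blast+
qed

lemma thin_triangle_zero_if_unique_paths:
  assumes unique: "\<And>xs ys. cayley_path G A xs \<Longrightarrow> cayley_path G A ys \<Longrightarrow>
      hd xs = hd ys \<Longrightarrow> last xs = last ys \<Longrightarrow> xs = ys"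
    and "geodesic_triangle G A p q r"
  shows "thin_triangle G A 0 p q r"
proof -
  from assms(2) have p: "cayley_path G A p" and q: "cayley_path G A q" and r: "cayley_path G A r"
    and "last p = hd q" "hd r = hd p" "last r = last q"
    by (auto simp: geodesic_triangle_def geodesic_def)
  moreover have "p \<noteq> []" "q \<noteq> []" using p q by (auto simp: cayley_path_def)
  ultimately have "p @ tl q = r"
    using unique[OF cayley_path_concat[OF p q] r] by (cases q) (auto simp: last_append)
  with \<open>last p = hd q\<close> \<open>p \<noteq> []\<close> \<open>q \<noteq> []\<close> have "set r = set p \<union> set q"
    by (cases q) auto
  moreover have "set p \<subseteq> carrier G" "set q \<subseteq> carrier G"
    using p q by (auto simp: cayley_path_def)
  ultimately have "set p \<subseteq> out_ball G A 0 (set p)" "set p \<subseteq> in_ball G A 0 (set p)"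
    "set q \<subseteq> out_ball G A 0 (set q)" "set q \<subseteq> in_ball G A 0 (set q)"
    "set r = set p \<union> set q"
    by (simp_all add: subset_out_ball_zero subset_in_ball_zero)
  then show ?thesis
    unfolding thin_triangle_def out_ball_def in_ball_def by blast
qed

lemma MI_cong_length_butlast:
  "(u, v) \<in> MI_cong I \<Longrightarrow> length u = length v \<and> (butlast u, butlast v) \<in> MI_cong I"
proof (induction rule: MI_cong.induct)
  case (ctx u v x y)
  show ?case
  proof (cases "y = []")
    case True
    then show ?thesis using ctx MI_cong.ctx[of "butlast u" "butlast v" I x "[]"]
      by (auto simp: butlast_append MI_cong.refl)
  next
    case False
    then show ?thesis using ctx MI_cong.ctx[of u v I x "butlast y"]
      by (auto simp: butlast_append)
  qed
qed (auto simp: butlast_append intro: MI_cong.intros)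

lemma MI_cong_snoc_cancel: "(u @ [x], v @ [y]) \<in> MI_cong I \<Longrightarrow> (u, v) \<in> MI_cong I"
  using MI_cong_length_butlast by fastforce

lemma equiv_MI_cong: "equiv UNIV (MI_cong I)"
  unfolding equiv_def refl_on_def sym_def trans_def
  by (simp add: MI_cong.refl) (metis MI_cong.sym MI_cong.trans)

lemma MI_class_eq_iff: "MI_cong I `` {u} = MI_cong I `` {v} \<longleftrightarrow> (u, v) \<in> MI_cong I"
  using eq_equiv_class_iff[OF equiv_MI_cong] by blast

lemma MI_cong_append:
  "(u, u') \<in> MI_cong I \<Longrightarrow> (v, v') \<in> MI_cong I \<Longrightarrow> (u @ v, u' @ v') \<in> MI_cong I"
  using MI_cong.ctx[of u u' I "[]" v] MI_cong.ctx[of v v' I u' "[]"]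
  by (auto intro: MI_cong.trans)

lemma carrier_M_I: "carrier (M_I I) = UNIV // MI_cong I"
  by (simp add: M_I_def)

lemma one_M_I: "\<one>\<^bsub>M_I I\<^esub> = MI_cong I `` {[]}"
  by (simp add: M_I_def)

lemma mult_M_I_classes:
  "MI_cong I `` {u} \<otimes>\<^bsub>M_I I\<^esub> MI_cong I `` {v} = MI_cong I `` {u @ v}"
  unfolding M_I_def by (auto intro: MI_cong.trans MI_cong_append MI_cong.refl)

lemma monoid_M_I: "monoid (M_I I)"
  by (rule monoidI)
    (auto simp: carrier_M_I one_M_I mult_M_I_classes elim!: quotientE intro!: quotientI)

definition MI_letters :: "nat set \<Rightarrow> gen4 list set set" where
  "MI_letters I = (\<lambda>x. MI_cong I `` {[x]}) ` {ga, gb, gc, gd}"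

lemma finite_MI_letters: "finite (MI_letters I)"
  by (simp add: MI_letters_def)

lemma MI_class_in_monoid_span: "MI_cong I `` {w} \<in> monoid_span (M_I I) (MI_letters I)"
proof (induction w rule: rev_induct)
  case Nil
  then show ?case using monoid_span.one[of "M_I I"] by (simp add: one_M_I)
next
  case (snoc x w)
  have "MI_cong I `` {[x]} \<in> MI_letters I" by (cases x) (simp_all add: MI_letters_def)
  from monoid_span.step[OF snoc this] show ?case by (simp add: mult_M_I_classes)
qed

lemma generates_M_I: "generates (M_I I) (MI_letters I)"
  unfolding generates_def
proof
  show "MI_letters I \<subseteq> carrier (M_I I)"
    by (auto simp: MI_letters_def carrier_M_I quotientI)
  show "carrier (M_I I) \<subseteq> monoid_span (M_I I) (MI_letters I)"
    by (auto simp: carrier_M_I MI_class_in_monoid_span elim!: quotientE)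
qed

text \<open>By \<open>MI_cong_length_butlast\<close> all representatives of a class have the same length, so the
  choice made by \<open>SOME\<close> is immaterial.\<close>

definition MI_length :: "gen4 list set \<Rightarrow> nat" where
  "MI_length X = length (SOME w. w \<in> X)"

lemma MI_length_class: "MI_length (MI_cong I `` {u}) = length u"
proof -
  have "u \<in> MI_cong I `` {u}" by (simp add: MI_cong.refl)
  then have "(SOME w. w \<in> MI_cong I `` {u}) \<in> MI_cong I `` {u}" by (rule someI)
  then show ?thesis using MI_cong_length_butlast by (auto simp: MI_length_def)
qed

lemma M_I_cayley_edgeE:
  assumes "cayley_edge (M_I I) (MI_letters I) m n"
  obtains u x where "m = MI_cong I `` {u}" "n = MI_cong I `` {u @ [x]}"
proof -
  from assms obtain a where m: "m \<in> carrier (M_I I)" and a: "a \<in> MI_letters I"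
    and n: "m \<otimes>\<^bsub>M_I I\<^esub> a = n" unfolding cayley_edge_def by blast
  from m obtain u where u: "m = MI_cong I `` {u}" by (auto simp: carrier_M_I elim!: quotientE)
  from a obtain x where "a = MI_cong I `` {[x]}" by (auto simp: MI_letters_def)
  with n u have "n = MI_cong I `` {u @ [x]}" by (simp add: mult_M_I_classes)
  with u that show ?thesis by blast
qed

lemma M_I_cayley_edge_length:
  "cayley_edge (M_I I) (MI_letters I) m n \<Longrightarrow> MI_length n = Suc (MI_length m)"
  by (erule M_I_cayley_edgeE) (simp add: MI_length_class)

lemma M_I_cayley_edge_unique_source:
  assumes "cayley_edge (M_I I) (MI_letters I) m n" and "cayley_edge (M_I I) (MI_letters I) m' n"
  shows "m = m'"
proof -
  obtain u x where u: "m = MI_cong I `` {u}" "n = MI_cong I `` {u @ [x]}"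
    using assms(1) by (rule M_I_cayley_edgeE)
  obtain v y where v: "m' = MI_cong I `` {v}" "n = MI_cong I `` {v @ [y]}"
    using assms(2) by (rule M_I_cayley_edgeE)
  from u v have "(u @ [x], v @ [y]) \<in> MI_cong I" using MI_class_eq_iff by metis
  then have "(u, v) \<in> MI_cong I" by (rule MI_cong_snoc_cancel)
  with u v show ?thesis using MI_class_eq_iff by metis
qed

lemma M_I_cayley_path_unique:
  assumes "cayley_path (M_I I) (MI_letters I) xs" and "cayley_path (M_I I) (MI_letters I) ys"
    and "hd xs = hd ys" and "last xs = last ys"
  shows "xs = ys"
  using M_I_cayley_edge_unique_source M_I_cayley_edge_length assms
  by (rule cayley_path_unique)

theorem proposition7p3:
  fixes I :: "nat set"
  shows "monoid (M_I I) \<and> finitely_generated (M_I I) \<and> strongly_hyperbolic (M_I I) 0"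
proof (intro conjI)
  show "monoid (M_I I)" by (rule monoid_M_I)
  show "finitely_generated (M_I I)"
    unfolding finitely_generated_def using finite_MI_letters generates_M_I by blast
  have "thin_triangle (M_I I) (MI_letters I) 0 p q r"
    if "geodesic_triangle (M_I I) (MI_letters I) p q r" for p q r
    using M_I_cayley_path_unique that by (rule thin_triangle_zero_if_unique_paths)
  then show "strongly_hyperbolic (M_I I) 0"
    unfolding strongly_hyperbolic_def using finite_MI_letters generates_M_I by blast
qed

end
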